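(* If $G$ is a connected graph with diameter at most two, then $\chi_L(G)=\chi_{L_2}(G)$.
   Context: All graphs are finite and simple. A proper $k$-coloring of $G$ is a map $f$ from $V(G)$ onto $[k]=\{1,\dots,k\}$ with adjacent vertices receiving different colors; $f(S)=\{f(u):u\in S\}$ and $N_G(u)$ is the neighborhood of $u$. For a connected graph $G$ with proper $k$-coloring $f$ and color classes $V_i=f^{-1}(i)$, the color code of $v$ is $(d(v,V_1),\dots,d(v,V_k))$, where $d(v,S)=\min_{x\in S}d(v,x)$; $f$ is a locating coloring if distinct vertices have distinct color codes, and $\chi_L(G)$ is the minimum number of colors in a locating coloring. A proper $k$-coloring $f$ is a neighbor locating coloring if for any two distinct vertices $u,v$ with $f(u)=f(v)$ we have $f(N_G(u))\ne f(N_G(v))$; $\chi_{L_2}(G)$ is the minimum number of colors in a neighbor locating coloring of $G$. *)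

theory Defs
  imports Main
begin

definition simple_graph :: "'a set \<Rightarrow> ('a \<Rightarrow> 'a \<Rightarrow> bool) \<Rightarrow> bool" where
  "simple_graph V E \<longleftrightarrow> finite V \<and> (\<forall>u v. E u v \<longrightarrow> u \<in> V \<and> v \<in> V)
     \<and> (\<forall>u v. E u v \<longrightarrow> E v u) \<and> (\<forall>u. \<not> E u u)"

(* xs is a walk in (V,E) from u to v of length (length xs - 1) *)
definition is_walk :: "'a set \<Rightarrow> ('a \<Rightarrow> 'a \<Rightarrow> bool) \<Rightarrow> 'a list \<Rightarrow> 'a \<Rightarrow> 'a \<Rightarrow> bool" where
  "is_walk V E xs u v \<longleftrightarrow> xs \<noteq> [] \<and> hd xs = u \<and> last xs = v \<and> set xs \<subseteq> V
     \<and> (\<forall>i. Suc i < length xs \<longrightarrow> E (xs ! i) (xs ! Suc i))"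

definition connected_graph :: "'a set \<Rightarrow> ('a \<Rightarrow> 'a \<Rightarrow> bool) \<Rightarrow> bool" where
  "connected_graph V E \<longleftrightarrow> simple_graph V E \<and> V \<noteq> {}
     \<and> (\<forall>u\<in>V. \<forall>v\<in>V. \<exists>xs. is_walk V E xs u v)"

(* distance d(u,v): least length of a walk from u to v (meaningful in connected graphs) *)
definition gdist :: "'a set \<Rightarrow> ('a \<Rightarrow> 'a \<Rightarrow> bool) \<Rightarrow> 'a \<Rightarrow> 'a \<Rightarrow> nat" where
  "gdist V E u v = (LEAST n. \<exists>xs. is_walk V E xs u v \<and> length xs = Suc n)"

definition diameter_at_most :: "'a set \<Rightarrow> ('a \<Rightarrow> 'a \<Rightarrow> bool) \<Rightarrow> nat \<Rightarrow> bool" where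
  "diameter_at_most V E m \<longleftrightarrow> (\<forall>u\<in>V. \<forall>v\<in>V. gdist V E u v \<le> m)"

definition nbhd :: "'a set \<Rightarrow> ('a \<Rightarrow> 'a \<Rightarrow> bool) \<Rightarrow> 'a \<Rightarrow> 'a set" where
  "nbhd V E u = {w \<in> V. E u w}"

definition proper_coloring :: "'a set \<Rightarrow> ('a \<Rightarrow> 'a \<Rightarrow> bool) \<Rightarrow> nat \<Rightarrow> ('a \<Rightarrow> nat) \<Rightarrow> bool" where
  "proper_coloring V E k f \<longleftrightarrow> f ` V = {1..k} \<and> (\<forall>u\<in>V. \<forall>v\<in>V. E u v \<longrightarrow> f u \<noteq> f v)"

definition dist_class :: "'a set \<Rightarrow> ('a \<Rightarrow> 'a \<Rightarrow> bool) \<Rightarrow> ('a \<Rightarrow> nat) \<Rightarrow> 'a \<Rightarrow> nat \<Rightarrow> nat" where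
  "dist_class V E f v i = Min ((\<lambda>x. gdist V E v x) ` {x \<in> V. f x = i})"

definition color_code :: "'a set \<Rightarrow> ('a \<Rightarrow> 'a \<Rightarrow> bool) \<Rightarrow> nat \<Rightarrow> ('a \<Rightarrow> nat) \<Rightarrow> 'a \<Rightarrow> nat list" where
  "color_code V E k f v = map (dist_class V E f v) [1..<Suc k]"

definition locating_coloring :: "'a set \<Rightarrow> ('a \<Rightarrow> 'a \<Rightarrow> bool) \<Rightarrow> nat \<Rightarrow> ('a \<Rightarrow> nat) \<Rightarrow> bool" where
  "locating_coloring V E k f \<longleftrightarrow> proper_coloring V E k f \<and> inj_on (color_code V E k f) V"

definition neighbor_locating_coloring :: "'a set \<Rightarrow> ('a \<Rightarrow> 'a \<Rightarrow> bool) \<Rightarrow> nat \<Rightarrow> ('a \<Rightarrow> nat) \<Rightarrow> bool" where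
  "neighbor_locating_coloring V E k f \<longleftrightarrow> proper_coloring V E k f \<and>
     (\<forall>u\<in>V. \<forall>v\<in>V. u \<noteq> v \<and> f u = f v \<longrightarrow> f ` nbhd V E u \<noteq> f ` nbhd V E v)"

definition locating_chromatic_number :: "'a set \<Rightarrow> ('a \<Rightarrow> 'a \<Rightarrow> bool) \<Rightarrow> nat" where
  "locating_chromatic_number V E = (LEAST k. \<exists>f. locating_coloring V E k f)"

definition neighbor_locating_chromatic_number :: "'a set \<Rightarrow> ('a \<Rightarrow> 'a \<Rightarrow> bool) \<Rightarrow> nat" where
  "neighbor_locating_chromatic_number V E = (LEAST k. \<exists>f. neighbor_locating_coloring V E k f)"

end

theory Submission imports Defs begin

text \<open>In a connected graph of diameter at most two the distance from a vertex v to a colour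
class is 0 if v has that colour, 1 if some neighbour of v has it, and 2 otherwise. So the colour
code of v is determined by, and determines, the pair (colour of v, colours on the neighbourhood
of v); distinct colour codes and distinct neighbourhood colour sets within a colour class are
then the same requirement, for every number of colours.\<close>

lemma gdist_walk:
  assumes "is_walk V E xs u v"
  shows "\<exists>ys. is_walk V E ys u v \<and> length ys = Suc (gdist V E u v)"
proof -
  have "length xs = Suc (length xs - 1)"
    using assms unfolding is_walk_def by (cases xs) auto
  then have "\<exists>n ys. is_walk V E ys u v \<and> length ys = Suc n"
    using assms by blast
  then show ?thesis
    unfolding gdist_def by (rule LeastI_ex)
qed

lemma gdist_le:
  assumes "is_walk V E xs u v" "length xs = Suc n"
  shows "gdist V E u v \<le> n"
  unfolding gdist_def using assms by (blast intro: Least_le)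

lemma gdist_eq_0_iff:
  assumes "connected_graph V E" "u \<in> V" "x \<in> V"
  shows "gdist V E u x = 0 \<longleftrightarrow> x = u"
proof
  assume "gdist V E u x = 0"
  moreover obtain xs where "is_walk V E xs u x"
    using assms unfolding connected_graph_def by blast
  ultimately obtain ys where "is_walk V E ys u x" "length ys = 1"
    using gdist_walk by fastforce
  then show "x = u"
    unfolding is_walk_def by (cases ys) auto
next
  assume "x = u"
  then have "is_walk V E [u] u x"
    using assms(2) by (simp add: is_walk_def)
  then show "gdist V E u x = 0"
    using gdist_le[of V E "[u]" u x 0] by simp
qed

lemma gdist_eq_1_iff:
  assumes "connected_graph V E" "u \<in> V" "x \<in> V"
  shows "gdist V E u x = 1 \<longleftrightarrow> E u x"
proof
  assume "gdist V E u x = 1"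
  moreover obtain xs where "is_walk V E xs u x"
    using assms unfolding connected_graph_def by blast
  ultimately obtain ys where ys: "is_walk V E ys u x" "length ys = 2"
    using gdist_walk by fastforce
  then obtain a b where "ys = [a, b]"
    by (cases ys; cases "tl ys") auto
  then show "E u x"
    using ys unfolding is_walk_def by force
next
  assume e: "E u x"
  then have "u \<noteq> x"
    using assms(1) unfolding connected_graph_def simple_graph_def by auto
  then have "gdist V E u x \<noteq> 0"
    using gdist_eq_0_iff[OF assms] by auto
  moreover have "is_walk V E [u, x] u x"
    using e assms(2,3) by (auto simp: is_walk_def less_Suc_eq)
  then have "gdist V E u x \<le> 1"
    using gdist_le[of V E "[u, x]" u x 1] by simp
  ultimately show "gdist V E u x = 1"
    by simp
qed

text \<open>The distance from a vertex of colour c, whose neighbours carry the colours C,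
to the colour class i in a graph of diameter at most two.\<close>

definition dist2_code :: "nat \<Rightarrow> nat set \<Rightarrow> nat \<Rightarrow> nat" where
  "dist2_code c C i = (if i = c then 0 else if i \<in> C then 1 else 2)"

lemma dist2_code_eq_iff:
  assumes "c \<in> I" "d \<in> I" "C \<subseteq> I" "D \<subseteq> I" "c \<notin> C" "d \<notin> D"
  shows "(\<forall>i\<in>I. dist2_code c C i = dist2_code d D i) \<longleftrightarrow> c = d \<and> C = D"
proof
  assume codes: "\<forall>i\<in>I. dist2_code c C i = dist2_code d D i"
  then have "c = d"
    using assms(1) by (auto simp: dist2_code_def split: if_splits)
  moreover have "i \<in> D" if "i \<in> C" for i
    using codes that assms \<open>c = d\<close> by (auto simp: dist2_code_def split: if_splits)
  moreover have "i \<in> C" if "i \<in> D" for i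
    using codes that assms \<open>c = d\<close> by (auto simp: dist2_code_def split: if_splits)
  ultimately show "c = d \<and> C = D"
    by blast
qed simp

lemma dist_class_diameter_2:
  assumes conn: "connected_graph V E" and diam: "diameter_at_most V E 2"
    and col: "proper_coloring V E k f" and v: "v \<in> V" and i: "i \<in> {1..k}"
  shows "dist_class V E f v i = dist2_code (f v) (f ` nbhd V E v) i"
proof -
  let ?c = "dist2_code (f v) (f ` nbhd V E v) i"
  let ?S = "gdist V E v ` {x \<in> V. f x = i}"
  have lower: "?c \<le> gdist V E v x" if x: "x \<in> V" "f x = i" for x
    using gdist_eq_0_iff[OF conn v x(1)] gdist_eq_1_iff[OF conn v x(1)] x
    by (auto simp: dist2_code_def nbhd_def)
  obtain y where y: "y \<in> V" "f y = i"
    using col i unfolding proper_coloring_def by (metis imageE)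
  have "\<exists>x\<in>V. f x = i \<and> gdist V E v x \<le> ?c"
  proof (cases "i = f v")
    case True
    then show ?thesis
      using v gdist_eq_0_iff[OF conn v v] by auto
  next
    case False
    show ?thesis
    proof (cases "i \<in> f ` nbhd V E v")
      case True
      then obtain x where x: "x \<in> V" "E v x" "f x = i"
        unfolding nbhd_def by blast
      then have "gdist V E v x = 1"
        using gdist_eq_1_iff[OF conn v] by blast
      then show ?thesis
        using x False True by (auto simp: dist2_code_def)
    next
      case outside: False
      have "gdist V E v y \<le> 2"
        using diam v y(1) unfolding diameter_at_most_def by blast
      then show ?thesis
        using y False outside by (auto simp: dist2_code_def)
    qed
  qed
  then have "?c \<in> ?S"
    using lower by (force intro: le_antisym)
  moreover have "finite V"
    using conn unfolding connected_graph_def simple_graph_def by blast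
  ultimately show ?thesis
    unfolding dist_class_def using lower by (intro Min_eqI) auto
qed

lemma color_code_eq_iff_diameter_2:
  assumes conn: "connected_graph V E" and diam: "diameter_at_most V E 2"
    and col: "proper_coloring V E k f" and u: "u \<in> V" and v: "v \<in> V"
  shows "color_code V E k f u = color_code V E k f v
           \<longleftrightarrow> f u = f v \<and> f ` nbhd V E u = f ` nbhd V E v"
proof -
  have colors: "f w \<in> {1..k}" "f ` nbhd V E w \<subseteq> {1..k}" "f w \<notin> f ` nbhd V E w"
    if "w \<in> V" for w
    using col that unfolding proper_coloring_def nbhd_def by force+
  have "color_code V E k f u = color_code V E k f v
          \<longleftrightarrow> (\<forall>i\<in>{1..k}. dist_class V E f u i = dist_class V E f v i)"
    unfolding color_code_def map_eq_conv by (simp only: set_upt atLeastLessThanSuc_atLeastAtMost)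
  also have "\<dots> \<longleftrightarrow> (\<forall>i\<in>{1..k}. dist2_code (f u) (f ` nbhd V E u) i
                                  = dist2_code (f v) (f ` nbhd V E v) i)"
    using dist_class_diameter_2[OF conn diam col] u v by simp
  also have "\<dots> \<longleftrightarrow> f u = f v \<and> f ` nbhd V E u = f ` nbhd V E v"
    using colors u v by (intro dist2_code_eq_iff) auto
  finally show ?thesis .
qed

lemma locating_iff_neighbor_locating_diameter_2:
  assumes "connected_graph V E" "diameter_at_most V E 2"
  shows "locating_coloring V E k f \<longleftrightarrow> neighbor_locating_coloring V E k f"
proof (cases "proper_coloring V E k f")
  case True
  then have "inj_on (color_code V E k f) V
      \<longleftrightarrow> (\<forall>u\<in>V. \<forall>v\<in>V. u \<noteq> v \<and> f u = f v \<longrightarrow> f ` nbhd V E u \<noteq> f ` nbhd V E v)"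
    unfolding inj_on_def using color_code_eq_iff_diameter_2[OF assms] by metis
  then show ?thesis
    unfolding locating_coloring_def neighbor_locating_coloring_def by simp
qed (simp add: locating_coloring_def neighbor_locating_coloring_def)

theorem proposition1:
  fixes V :: "'a set" and E :: "'a \<Rightarrow> 'a \<Rightarrow> bool"
  assumes "connected_graph V E"
    and "diameter_at_most V E 2"
  shows "locating_chromatic_number V E = neighbor_locating_chromatic_number V E"
  unfolding locating_chromatic_number_def neighbor_locating_chromatic_number_def
  using locating_iff_neighbor_locating_diameter_2[OF assms] by presburger

end
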